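(* Let $k\ge 4$ and let $w$ be a minimal uncompletable word for $S_k$. Let $p,q\in\{u,v\}$ be two consecutive occurrences in $w$ ($p$ before $q$), with sets of forbidden local positions $F_p,F_q\subseteq\{0,\dots,k-1\}$. If $|F_p|>|F_q|$, then one of the following holds: (i) $p$ and $q$ are both occurrences of $u$, $F_p=\{0,k-j,k-j+1,\dots,k-1\}$ and $F_q=\{1,2,\dots,j\}$ for some $1\le j\le k-2$; (ii) $p$ is an occurrence of $v$, $q$ is an occurrence of $u$, these occurrences overlap, $F_p=\{0,k-1\}$ and $F_q=\{1\}$; (iii) $p$ is an occurrence of $u$, $q$ is an occurrence of $v$, $F_q=\{0,1,\dots,i\}\cup\{j,j+1,\dots,k-1\}$ and $F_p=\{0\}\cup\{j-i-1,\dots,k-1\}$ for some integers $0\le i<j\le k$ with $j\ne i+1$ (where $\{j,\dots,k-1\}$ is empty if $j=k$), and the number of letters strictly between these two occurrences is congruent to $k-1-i$ modulo $k$.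
   Context: $\Sigma=\{a,b\}$. $S_k=\left(\Sigma^k\setminus\{ba^{k-1},b^{k-1}a\}\right)\cup\left(\Sigma^{k-1}\setminus\{a^{k-1},b^{k-1}\}\right)$, $u=ba^{k-1}$, $v=b^{k-1}a$. $\mathit{Fact}(S^* )$ and $\mathit{Pref}(S^* )$ are the sets of factors and of prefixes of words in $S^*$. A word $w\notin\mathit{Fact}(S_k^* )$ is uncompletable; a minimal uncompletable word is one of minimal length. For $w=w_1\cdots w_n$, $w[i..j]=w_i\cdots w_j$ (empty if $i>j$). A position $j$, $0\le j\le n-1$, is forbidden in $w$ if $w[j+1..n]\notin\mathit{Pref}(S_k^* )$. An occurrence of $p\in\{u,v\}$ in $w$ is an index $s$ with $w[s+1..s+k]=p$; local position $i\in\{0,\dots,k-1\}$ of the occurrence is the position $s+i$ of $w$, and it is forbidden in the occurrence if $s+i$ is forbidden in $w$. Two occurrences of words from $\{u,v\}$ starting at $s<t$ overlap if $t<s+k$; they are consecutive if either they overlap or they are the only occurrences of $u$ or $v$ lying inside the factor $w[s+1..t+k]$. *)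

theory Defs
  imports Main "HOL-Number_Theory.Cong"
begin

datatype sym = A | B

type_synonym word = "sym list"

definition Sk :: "nat \<Rightarrow> word set" where
  "Sk k = ({w. length w = k} - {B # replicate (k-1) A, replicate (k-1) B @ [A]})
        \<union> ({w. length w = k - 1} - {replicate (k-1) A, replicate (k-1) B})"

definition uw :: "nat \<Rightarrow> word" where "uw k = B # replicate (k-1) A"
definition vw :: "nat \<Rightarrow> word" where "vw k = replicate (k-1) B @ [A]"

definition kstar :: "word set \<Rightarrow> word set" where
  "kstar S = {concat ws | ws. set ws \<subseteq> S}"

definition Fact :: "word set \<Rightarrow> word set" where
  "Fact L = {x. \<exists>y z. y @ x @ z \<in> L}"

definition Pref :: "word set \<Rightarrow> word set" where
  "Pref L = {x. \<exists>z. x @ z \<in> L}"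

definition uncompletable :: "nat \<Rightarrow> word \<Rightarrow> bool" where
  "uncompletable k w \<longleftrightarrow> w \<notin> Fact (kstar (Sk k))"

definition min_uncompletable :: "nat \<Rightarrow> word \<Rightarrow> bool" where
  "min_uncompletable k w \<longleftrightarrow> uncompletable k w \<and>
      (\<forall>w'. uncompletable k w' \<longrightarrow> length w \<le> length w')"

definition forbidden :: "nat \<Rightarrow> word \<Rightarrow> nat \<Rightarrow> bool" where
  "forbidden k w j \<longleftrightarrow> j < length w \<and> drop j w \<notin> Pref (kstar (Sk k))"

definition occ :: "nat \<Rightarrow> word \<Rightarrow> word \<Rightarrow> nat \<Rightarrow> bool" where
  "occ k w p s \<longleftrightarrow> s + k \<le> length w \<and> take k (drop s w) = p"

definition occ_uv :: "nat \<Rightarrow> word \<Rightarrow> nat \<Rightarrow> bool" where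
  "occ_uv k w s \<longleftrightarrow> occ k w (uw k) s \<or> occ k w (vw k) s"

definition Floc :: "nat \<Rightarrow> word \<Rightarrow> nat \<Rightarrow> nat set" where
  "Floc k w s = {i. i < k \<and> forbidden k w (s + i)}"

definition overlap :: "nat \<Rightarrow> nat \<Rightarrow> nat \<Rightarrow> bool" where
  "overlap k s t \<longleftrightarrow> t < s + k"

definition consecutive :: "nat \<Rightarrow> word \<Rightarrow> nat \<Rightarrow> nat \<Rightarrow> bool" where
  "consecutive k w s t \<longleftrightarrow> s < t \<and> occ_uv k w s \<and> occ_uv k w t \<and>
     (overlap k s t \<or>
      (\<forall>r. occ_uv k w r \<and> s \<le> r \<and> r + k \<le> t + k \<longrightarrow> r = s \<or> r = t))"

end

theory Submission
  imports Defs
begin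

text \<open>
  Everything rests on a local recurrence (\<open>forbidden_rec\<close>): since \<open>S\<^sub>k\<close> misses only \<open>u\<close>, \<open>v\<close>
  and the two constant words of length \<open>k - 1\<close>, a forbidden position \<open>j\<close> not starting an
  occurrence forces \<open>j + k\<close> to be forbidden, and also \<open>j + k - 1\<close> if the block of length
  \<open>k - 1\<close> at \<open>j\<close> is not constant.  Minimality enters only through a truncation argument
  showing that every occurrence has a forbidden local position (\<open>Floc_nonempty\<close>).
  Between consecutive occurrences \<open>s < t\<close>, forbidden positions thus travel in steps of \<open>k\<close>
  into the window of \<open>t\<close>, keeping their residue mod \<open>k\<close>; comparing residues gives a
  counting principle (\<open>card_le_by_residues\<close>).  Assuming \<open>|F\<^sub>s| > |F\<^sub>t|\<close>, it rules out \<open>v\<close>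
  at \<open>s\<close> unless the occurrences overlap, which forces case (ii); for \<open>u\<close> at \<open>s\<close> it makes the
  forbidden positions periodic, a descent along non-constant blocks shows that \<open>F\<^sub>s - {0}\<close>
  is a final interval, and \<open>F\<^sub>t\<close> follows, giving cases (i) and (iii).
\<close>

lemma Sk_length: "x \<in> Sk k \<Longrightarrow> length x = k \<or> length x = k - 1"
  by (auto simp: Sk_def)

lemma Sk_length_k: "length x = k \<Longrightarrow> 1 \<le> k \<Longrightarrow> x \<in> Sk k \<longleftrightarrow> x \<noteq> uw k \<and> x \<noteq> vw k"
  by (auto simp: Sk_def uw_def vw_def)

lemma Sk_length_k1:
  "length x = k - 1 \<Longrightarrow> 1 \<le> k \<Longrightarrow> x \<in> Sk k \<longleftrightarrow> x \<noteq> replicate (k-1) A \<and> x \<noteq> replicate (k-1) B"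
  by (auto simp: Sk_def)

lemma kstar_Nil: "[] \<in> kstar S"
  unfolding kstar_def by (intro CollectI exI[of _ "[]"]) auto

lemma kstar_append: "c \<in> S \<Longrightarrow> y \<in> kstar S \<Longrightarrow> c @ y \<in> kstar S"
proof -
  assume "c \<in> S" "y \<in> kstar S"
  then obtain ws where "y = concat ws" "set ws \<subseteq> S" by (auto simp: kstar_def)
  then show ?thesis using \<open>c \<in> S\<close> unfolding kstar_def by (intro CollectI exI[of _ "c # ws"]) auto
qed

lemma Pref_Nil: "[] \<in> Pref (kstar S)"
  unfolding Pref_def using kstar_Nil by fastforce

lemma Pref_append: "c \<in> S \<Longrightarrow> y \<in> Pref (kstar S) \<Longrightarrow> c @ y \<in> Pref (kstar S)"
  unfolding Pref_def using kstar_append by fastforce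

lemma uw_nth: "i < k \<Longrightarrow> uw k ! i = (if i = 0 then B else A)"
  by (auto simp: uw_def nth_Cons')

lemma vw_nth: "i < k \<Longrightarrow> vw k ! i = (if i = k - 1 then A else B)"
  by (auto simp: vw_def nth_append)

text \<open>Every word shorter than \<open>k\<close> can be padded with \<open>b\<close>'s to a code word.\<close>

lemma short_Pref:
  assumes "length x < k" "2 \<le> k"
  shows "x \<in> Pref (kstar (Sk k))"
proof -
  define z where "z = replicate (k - length x) B"
  have len: "length (x @ z) = k" using assms by (simp add: z_def)
  have last: "(x @ z) ! (k - 1) = B" using assms by (auto simp: z_def nth_append)
  have "x @ z \<noteq> uw k" using last assms uw_nth[of "k-1" k] by auto
  moreover have "x @ z \<noteq> vw k" using last assms vw_nth[of "k-1" k] by auto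
  ultimately have "x @ z \<in> Sk k" using Sk_length_k[OF len] assms by auto
  hence "x @ z \<in> kstar (Sk k)" using kstar_append[OF _ kstar_Nil] by fastforce
  thus ?thesis unfolding Pref_def by blast
qed

lemma Pref_unfold:
  assumes "2 \<le> k" "k \<le> length x"
  shows "x \<in> Pref (kstar (Sk k)) \<longleftrightarrow>
     (take (k-1) x \<in> Sk k \<and> drop (k-1) x \<in> Pref (kstar (Sk k))) \<or>
     (take k x \<in> Sk k \<and> drop k x \<in> Pref (kstar (Sk k)))"
proof
  assume "x \<in> Pref (kstar (Sk k))"
  then obtain z ws where xz: "x @ z = concat ws" and ws: "set ws \<subseteq> Sk k"
    by (auto simp: Pref_def kstar_def)
  have "ws \<noteq> []" using xz assms by auto
  then obtain c ws' where wsc: "ws = c # ws'" by (cases ws) auto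
  have c: "c \<in> Sk k" using ws wsc by auto
  have eq: "x @ z = c @ concat ws'" using xz wsc by simp
  have "length c \<le> length x" using Sk_length[OF c] assms by auto
  hence tc: "take (length c) x = c" and dc: "drop (length c) x @ z = concat ws'"
    using eq by (metis append_eq_append_conv_if)+
  have "drop (length c) x \<in> Pref (kstar (Sk k))"
    using dc ws wsc unfolding Pref_def kstar_def by auto
  thus "(take (k-1) x \<in> Sk k \<and> drop (k-1) x \<in> Pref (kstar (Sk k))) \<or>
     (take k x \<in> Sk k \<and> drop k x \<in> Pref (kstar (Sk k)))"
    using Sk_length[OF c] tc c by auto
qed (metis append_take_drop_id Pref_append)

section \<open>The recurrence for forbidden positions\<close>

text \<open>\<open>const_block k w j\<close>: the factor of length \<open>k - 1\<close> starting at \<open>j\<close> is a power of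
  one letter, i.e.\ it is one of the two length-\<open>(k-1)\<close> words missing from \<open>S\<^sub>k\<close>.\<close>

definition const_block :: "nat \<Rightarrow> word \<Rightarrow> nat \<Rightarrow> bool" where
  "const_block k w j \<longleftrightarrow> (\<forall>i<k-1. w!(j+i) = w!j)"

lemma const_block_iff:
  assumes "j + k - 1 \<le> length w" "2 \<le> k"
  shows "(take (k-1) (drop j w) = replicate (k-1) A \<or> take (k-1) (drop j w) = replicate (k-1) B)
         \<longleftrightarrow> const_block k w j"
proof
  assume "take (k-1) (drop j w) = replicate (k-1) A \<or> take (k-1) (drop j w) = replicate (k-1) B"
  then obtain c where c: "take (k-1) (drop j w) = replicate (k-1) c" by blast
  have all: "w!(j+i) = c" if "i < k-1" for i
  proof -
    have "take (k-1) (drop j w) ! i = c" using c that by simp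
    thus "w!(j+i) = c" using that assms by simp
  qed
  have "w!j = c" using all[of 0] assms by simp
  thus "const_block k w j" unfolding const_block_def using all by simp
next
  assume "const_block k w j"
  hence "take (k-1) (drop j w) = replicate (k-1) (w!j)"
    using assms by (intro nth_equalityI) (auto simp: const_block_def)
  thus "take (k-1) (drop j w) = replicate (k-1) A \<or> take (k-1) (drop j w) = replicate (k-1) B"
    by (cases "w!j") auto
qed

lemma not_const_block:
  "i1 < k - 1 \<Longrightarrow> i2 < k - 1 \<Longrightarrow> w!(j+i1) \<noteq> w!(j+i2) \<Longrightarrow> \<not> const_block k w j"
  unfolding const_block_def by (metis (no_types))

lemma not_forbidden_iff: "\<not> forbidden k w m \<longleftrightarrow> drop m w \<in> Pref (kstar (Sk k))"
proof (cases "m < length w")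
  case False
  hence "drop m w = []" by simp
  thus ?thesis using False Pref_Nil unfolding forbidden_def by metis
qed (simp add: forbidden_def)

text \<open>The basic recurrence: position \<open>j\<close> is forbidden iff at least \<open>k\<close> letters follow
  it and neither a factorisation step of length \<open>k - 1\<close> nor one of length \<open>k\<close> can
  start there, either because the factor is not a code word or because the position
  reached is forbidden.\<close>

lemma forbidden_rec:
  assumes "2 \<le> k"
  shows "forbidden k w j \<longleftrightarrow> j + k \<le> length w \<and>
           (const_block k w j \<or> forbidden k w (j+k-1)) \<and> (occ_uv k w j \<or> forbidden k w (j+k))"
proof (cases "j + k \<le> length w")
  case False
  hence "length (drop j w) < k" using assms by simp
  hence "drop j w \<in> Pref (kstar (Sk k))" using short_Pref assms by blast
  thus ?thesis using False not_forbidden_iff by blast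
next
  case True
  have jn: "j < length w" using True assms by simp
  have len: "k \<le> length (drop j w)" using True by simp
  have l1: "length (take (k-1) (drop j w)) = k - 1" using True by simp
  have l2: "length (take k (drop j w)) = k" using True by simp
  have s1: "take (k-1) (drop j w) \<in> Sk k \<longleftrightarrow> \<not> const_block k w j"
  proof -
    have "j + k - 1 \<le> length w" using True by simp
    thus ?thesis using Sk_length_k1[OF l1] const_block_iff[of j k w] assms by auto
  qed
  have s2: "take k (drop j w) \<in> Sk k \<longleftrightarrow> \<not> occ_uv k w j"
    using Sk_length_k[OF l2] True assms by (auto simp: occ_uv_def occ_def)
  have d1: "drop (k-1) (drop j w) = drop (j+k-1) w" using assms by (simp add: add.commute)
  have d2: "drop k (drop j w) = drop (j+k) w" by (simp add: add.commute)
  have "forbidden k w j \<longleftrightarrow> drop j w \<notin> Pref (kstar (Sk k))" using jn by (simp add: forbidden_def)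
  also have "\<dots> \<longleftrightarrow> \<not> ((\<not> const_block k w j \<and> \<not> forbidden k w (j+k-1)) \<or>
                      (\<not> occ_uv k w j \<and> \<not> forbidden k w (j+k)))"
    using Pref_unfold[OF assms len] s1 s2 d1 d2 not_forbidden_iff by metis
  finally show ?thesis using True by blast
qed

lemma forbidden_length: "2 \<le> k \<Longrightarrow> forbidden k w j \<Longrightarrow> j + k \<le> length w"
  using forbidden_rec by blast

lemma forbidden_step:
  "2 \<le> k \<Longrightarrow> forbidden k w j \<Longrightarrow> \<not> occ_uv k w j \<Longrightarrow> forbidden k w (j+k)"
  using forbidden_rec by blast

lemma forbidden_step1:
  "2 \<le> k \<Longrightarrow> forbidden k w j \<Longrightarrow> \<not> const_block k w j \<Longrightarrow> forbidden k w (j+k-1)"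
  using forbidden_rec by blast

lemma occ_nth:
  assumes "length p = k"
  shows "occ k w p s \<longleftrightarrow> s + k \<le> length w \<and> (\<forall>i<k. w!(s+i) = p!i)"
proof
  assume "occ k w p s"
  hence len: "s + k \<le> length w" and p: "take k (drop s w) = p" by (auto simp: occ_def)
  have "w!(s+i) = p!i" if "i < k" for i
  proof -
    have "p ! i = drop s w ! i" using p that by (metis nth_take)
    thus ?thesis using len that by simp
  qed
  thus "s + k \<le> length w \<and> (\<forall>i<k. w!(s+i) = p!i)" using len by simp
next
  assume a: "s + k \<le> length w \<and> (\<forall>i<k. w!(s+i) = p!i)"
  have "take k (drop s w) = p" by (rule nth_equalityI) (use a assms in auto)
  thus "occ k w p s" using a by (simp add: occ_def)
qed

lemma occ_length: "occ k w p s \<Longrightarrow> s + k \<le> length w"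
  by (simp add: occ_def)

lemma occ_u_iff:
  "1 \<le> k \<Longrightarrow> occ k w (uw k) s \<longleftrightarrow> s + k \<le> length w \<and> (\<forall>i<k. w!(s+i) = (if i = 0 then B else A))"
  using occ_nth[of "uw k" k w s] uw_nth[of _ k] by (cases k) (auto simp: uw_def)

lemma occ_v_iff:
  "1 \<le> k \<Longrightarrow> occ k w (vw k) s \<longleftrightarrow> s + k \<le> length w \<and> (\<forall>i<k. w!(s+i) = (if i = k-1 then A else B))"
  using occ_nth[of "vw k" k w s] vw_nth[of _ k] by (cases k) (auto simp: vw_def)

lemma u_letter: "occ k w (uw k) s \<Longrightarrow> i < k \<Longrightarrow> w!(s+i) = (if i = 0 then B else A)"
  using occ_u_iff[of k w s] by auto

lemma v_letter: "occ k w (vw k) s \<Longrightarrow> i < k \<Longrightarrow> w!(s+i) = (if i = k-1 then A else B)"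
  using occ_v_iff[of k w s] by auto

lemma occ_uv_first: "occ_uv k w s \<Longrightarrow> 2 \<le> k \<Longrightarrow> w!s = B"
  unfolding occ_uv_def using u_letter[of k w s 0] v_letter[of k w s 0] by auto

lemma uw_neq_vw: "3 \<le> k \<Longrightarrow> occ k w (uw k) s \<Longrightarrow> \<not> occ k w (vw k) s"
proof -
  assume k: "3 \<le> k" and u: "occ k w (uw k) s"
  hence "1 \<noteq> k - 1" "(1::nat) < k" by auto
  thus ?thesis using u_letter[OF u, of 1] v_letter[of k w s 1] by auto
qed

lemma const_block_B_occ_v:
  assumes "2 \<le> k" "const_block k w j" "w!j = B" "w!(j+k-1) = A" "j + k \<le> length w"
  shows "occ k w (vw k) j"
  unfolding occ_v_iff[of k, OF order.trans[OF one_le_numeral assms(1)]]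
proof (intro conjI allI impI)
  fix i assume i: "i < k"
  show "w!(j+i) = (if i = k-1 then A else B)"
  proof (cases "i = k - 1")
    case True thus ?thesis using assms by simp
  next
    case False thus ?thesis using i assms by (simp add: const_block_def)
  qed
qed (use assms in auto)

lemma const_block_A_occ_u:
  assumes "2 \<le> k" "const_block k w (Suc j)" "w!(Suc j) = A" "w!j = B" "j + k \<le> length w"
  shows "occ k w (uw k) j"
  unfolding occ_u_iff[of k, OF order.trans[OF one_le_numeral assms(1)]]
proof (intro conjI allI impI)
  fix i assume "i < k"
  thus "w!(j+i) = (if i = 0 then B else A)"
    using assms by (cases i) (auto simp: const_block_def)
qed (use assms in auto)

text \<open>An occurrence of \<open>v\<close> is always forbidden (its first \<open>k - 1\<close> letters form the
  missing word \<open>b\<^sup>k\<^sup>-\<^sup>1\<close>); an occurrence of \<open>u\<close> is forbidden iff its last position is.\<close>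

lemma v_const_block: "2 \<le> k \<Longrightarrow> occ k w (vw k) j \<Longrightarrow> const_block k w j"
  unfolding const_block_def using v_letter[of k w j] v_letter[of k w j 0] by simp

lemma u_not_const_block: "3 \<le> k \<Longrightarrow> occ k w (uw k) j \<Longrightarrow> \<not> const_block k w j"
  using not_const_block[of 0 k 1 w j] u_letter[of k w j 0] u_letter[of k w j 1] by auto

lemma forbidden_v: "2 \<le> k \<Longrightarrow> occ k w (vw k) j \<Longrightarrow> forbidden k w j"
  using forbidden_rec[of k w j] v_const_block occ_length by (auto simp: occ_uv_def)

lemma forbidden_u:
  "3 \<le> k \<Longrightarrow> occ k w (uw k) j \<Longrightarrow> forbidden k w j \<longleftrightarrow> forbidden k w (j+k-1)"
  using forbidden_rec[of k w j] u_not_const_block[of k w j] occ_length[of k w "uw k" j]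
    forbidden_length[of k w "j+k-1"] by (auto simp: occ_uv_def)

section \<open>Uncompletable words and minimality\<close>

text \<open>If \<open>w\<close> is uncompletable, each of its first \<open>k\<close> positions is forbidden: otherwise
  a suitable code word of length \<open>k\<close> ending with \<open>w[1..c]\<close> would complete \<open>w\<close>.\<close>

lemma uncompletable_forbidden:
  assumes "uncompletable k w" "2 \<le> k" "c < k"
  shows "forbidden k w c"
proof (rule ccontr)
  assume "\<not> forbidden k w c"
  then obtain z where z: "drop c w @ z \<in> kstar (Sk k)"
    using not_forbidden_iff by (auto simp: Pref_def)
  define y where "y = replicate (k - length (take c w)) A"
  have len: "length (y @ take c w) = k" using assms by (simp add: y_def)
  have "length (take c w) < k" using assms by simp
  hence first: "(y @ take c w) ! 0 = A" by (simp add: y_def nth_append)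
  have "y @ take c w \<in> Sk k"
    using Sk_length_k[OF len] first uw_nth[of 0 k] vw_nth[of 0 k] assms by auto
  hence "(y @ take c w) @ (drop c w @ z) \<in> kstar (Sk k)" using kstar_append[OF _ z] by blast
  hence "y @ w @ z \<in> kstar (Sk k)" by (metis append_take_drop_id append.assoc)
  hence "w \<in> Fact (kstar (Sk k))" unfolding Fact_def by blast
  thus False using assms by (simp add: uncompletable_def)
qed

lemma factor_suffix_in_kstar:
  assumes "y @ r = concat ws" "set ws \<subseteq> Sk k" "k \<le> length r" "2 \<le> k"
  shows "\<exists>c<k. drop c r \<in> kstar (Sk k)"
  using assms
proof (induction ws arbitrary: y)
  case Nil
  then show ?case by simp
next
  case (Cons x ws)
  have xS: "x \<in> Sk k" and wsS: "set ws \<subseteq> Sk k" using Cons.prems by auto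
  have ws: "concat ws \<in> kstar (Sk k)" using wsS unfolding kstar_def by auto
  show ?case
  proof (cases "length x \<le> length y")
    case True
    then obtain y' where "y = x @ y'" using Cons.prems(1)
      by (metis append_eq_append_conv_if append_take_drop_id concat.simps(2))
    hence "y' @ r = concat ws" using Cons.prems(1) by simp
    thus ?thesis using Cons.IH wsS Cons.prems by blast
  next
    case long: False
    hence r: "r = drop (length y) x @ concat ws"
      using Cons.prems(1) by (auto simp: append_eq_append_conv_if)
    show ?thesis
    proof (cases "y = []")
      case True
      hence "drop 0 r \<in> kstar (Sk k)" using r xS ws kstar_append by simp
      thus ?thesis using Cons.prems(4) by (intro exI[of _ 0]) auto
    next
      case False
      have "length x - length y < k" using Sk_length[OF xS] False long by (cases y) auto
      moreover have "drop (length x - length y) r \<in> kstar (Sk k)" using r ws by simp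
      ultimately show ?thesis by blast
    qed
  qed
qed

lemma uncompletable_if_forbidden:
  assumes "2 \<le> k" "k \<le> length w" "\<forall>c<k. forbidden k w c"
  shows "uncompletable k w"
proof (rule ccontr)
  assume "\<not> uncompletable k w"
  then obtain y z ws where "y @ w @ z = concat ws" "set ws \<subseteq> Sk k"
    by (auto simp: uncompletable_def Fact_def kstar_def)
  then obtain c where c: "c < k" "drop c (w @ z) \<in> kstar (Sk k)"
    using factor_suffix_in_kstar[of y "w @ z" ws k] assms by auto
  hence "drop c w \<in> Pref (kstar (Sk k))" using assms unfolding Pref_def by auto
  thus False using assms c not_forbidden_iff by blast
qed

lemma forbidden_take:
  assumes k: "3 \<le> k" and len: "p + k \<le> length w"
    and free: "\<forall>i<k. \<not> forbidden k w (p+i)"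
    and no_v: "\<not> occ k w (vw k) p"
  shows "j < p + k \<Longrightarrow> forbidden k (take (p+k) w) j \<longleftrightarrow> forbidden k w j"
proof (induction "p + k - j" arbitrary: j rule: less_induct)
  case less
  define n where "n = p + k"
  have k2: "2 \<le> k" using k by simp
  have lt: "length (take n w) = n" using len by (simp add: n_def)
  have block: "const_block k (take n w) i \<longleftrightarrow> const_block k w i" if "i + k - 1 \<le> n" for i
    using that k2 by (auto simp: const_block_def)
  have occ: "occ_uv k (take n w) i \<longleftrightarrow> occ_uv k w i" if "i + k \<le> n" for i
    using that by (auto simp: occ_uv_def occ_def drop_take take_take min_def)
  show ?case
  proof (cases "p \<le> j")
    case True
    have "\<not> forbidden k (take n w) j"
    proof
      assume F: "forbidden k (take n w) j"
      have "j + k \<le> n" using forbidden_length[OF k2 F] lt by simp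
      hence "j = p" using True by (simp add: n_def)
      moreover have "\<not> forbidden k (take n w) (j+k-1)" "\<not> forbidden k (take n w) (j+k)"
        using forbidden_length[OF k2, of "take n w" "j+k-1"] forbidden_length[OF k2, of "take n w" "j+k"]
          lt \<open>j + k \<le> n\<close> True k by (auto simp: n_def)
      ultimately have "const_block k w j \<and> occ_uv k w j"
        using F forbidden_rec[OF k2, of "take n w" j] block[of j] occ[of j] by (auto simp: n_def)
      thus False using no_v \<open>j = p\<close> u_not_const_block[OF k] by (auto simp: occ_uv_def)
    qed
    moreover have "j - p < k" "p + (j - p) = j" using True less.prems by auto
    hence "\<not> forbidden k w j" using free by metis
    ultimately show ?thesis by (simp add: n_def)
  next
    case False
    hence jk: "j + k < n" by (simp add: n_def)
    have "forbidden k (take n w) (j+k-1) \<longleftrightarrow> forbidden k w (j+k-1)"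
      "forbidden k (take n w) (j+k) \<longleftrightarrow> forbidden k w (j+k)"
      using less.hyps[of "j+k-1"] less.hyps[of "j+k"] jk k by (auto simp: n_def)
    thus ?thesis using forbidden_rec[OF k2, of "take n w" j] forbidden_rec[OF k2, of w j]
        block[of j] occ[of j] lt jk by (auto simp: n_def)
  qed
qed

lemma min_uncompletable_free_window:
  assumes k: "3 \<le> k" and mu: "min_uncompletable k w" and len: "p + k \<le> length w"
    and free: "\<forall>i<k. \<not> forbidden k w (p+i)"
    and no_v: "\<not> occ k w (vw k) p"
  shows "length w = p + k"
proof -
  have unc: "uncompletable k w" using mu by (simp add: min_uncompletable_def)
  have "\<forall>c<k. forbidden k (take (p+k) w) c"
    using forbidden_take[OF k len free no_v] uncompletable_forbidden[OF unc] k by simp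
  hence "uncompletable k (take (p+k) w)"
    using uncompletable_if_forbidden[of k "take (p+k) w"] len k by simp
  hence "length w \<le> length (take (p+k) w)" using mu unfolding min_uncompletable_def by blast
  thus ?thesis using len by (simp add: min_def split: if_splits)
qed

text \<open>For \<open>v\<close> this is the first one; for \<open>u\<close> at \<open>t\<close> the free window at \<open>t\<close> would be
  final, and then the window at \<open>t - 1\<close> would be free and final as well.\<close>

lemma Floc_nonempty:
  assumes k: "4 \<le> k" and mu: "min_uncompletable k w" and occ: "occ_uv k w t"
  shows "Floc k w t \<noteq> {}"
proof
  assume empty: "Floc k w t = {}"
  have k2: "2 \<le> k" and k3: "3 \<le> k" using k by auto
  have free: "\<forall>i<k. \<not> forbidden k w (t+i)" using empty by (auto simp: Floc_def)
  have "\<not> occ k w (vw k) t" using free[rule_format, of 0] forbidden_v[OF k2] k by auto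
  hence u: "occ k w (uw k) t" using occ by (simp add: occ_uv_def)
  have t_len: "length w = t + k"
    using min_uncompletable_free_window[OF k3 mu occ_length[OF u] free] uw_neq_vw[OF k3 u] .
  have "forbidden k w 0"
    using uncompletable_forbidden[of k w 0] mu k by (simp add: min_uncompletable_def)
  hence t1: "1 \<le> t" using free k by (cases t) auto
  have wt: "w!(t-1+1) = B" "w!(t-1+2) = A"
    using u_letter[OF u, of 0] u_letter[OF u, of 1] t1 k by auto
  have "\<not> const_block k w (t-1)"
    using not_const_block[of 1 k 2 w "t-1"] wt k by auto
  moreover have "\<not> forbidden k w (t-1+k-1)"
    using forbidden_length[OF k2, of w "t-1+k-1"] t_len t1 k by auto
  ultimately have "\<not> forbidden k w (t-1)" using forbidden_rec[OF k2, of w "t-1"] by blast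
  have free1: "\<forall>i<k. \<not> forbidden k w (t-1+i)"
  proof (intro allI impI)
    fix i assume "i < k"
    thus "\<not> forbidden k w (t-1+i)"
      using free[rule_format, of "i - 1"] \<open>\<not> forbidden k w (t-1)\<close> t1 by (cases i) auto
  qed
  have "2 \<noteq> k - 1" using k by simp
  hence "\<not> occ k w (vw k) (t-1)"
    using v_letter[of k w "t-1" 2] wt k by auto
  hence "length w = t - 1 + k"
    using min_uncompletable_free_window[OF k3 mu _ free1] t_len t1 by simp
  thus False using t_len t1 by simp
qed

lemma overlap_v_u:
  assumes k: "4 \<le> k" and os: "occ_uv k w s" and ot: "occ_uv k w t" and st: "s < t" "t < s + k"
  shows "occ k w (vw k) s \<and> occ k w (uw k) t \<and> t = s + k - 2"
proof -
  define d where "d = t - s"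
  have d: "1 \<le> d" "d < k" "t = s + d" using st by (auto simp: d_def)
  have wt: "w!t = B" using occ_uv_first[OF ot] k by simp
  have vs: "occ k w (vw k) s"
    using os wt u_letter[of k w s d] d by (auto simp: occ_uv_def)
  have ut: "occ k w (uw k) t"
  proof -
    have "k - 1 - d \<noteq> k - 1" "t + (k - 1 - d) = s + (k - 1)" using d by auto
    hence "\<not> occ k w (vw k) t"
      using v_letter[of k w t "k-1-d"] v_letter[OF vs, of "k-1"] d by auto
    thus ?thesis using ot by (simp add: occ_uv_def)
  qed
  have "d \<noteq> k - 1" using v_letter[OF vs, of "k-1"] wt d by auto
  moreover have "d + 1 \<ge> k - 1"
  proof (rule ccontr)
    assume "\<not> d + 1 \<ge> k - 1"
    hence "w!(s + (d+1)) = B" using v_letter[OF vs, of "d+1"] by simp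
    moreover have "w!(t + 1) = A" using u_letter[OF ut, of 1] k by simp
    ultimately show False using d by simp
  qed
  ultimately have "d = k - 2" using d k by linarith
  thus ?thesis using vs ut d by simp
qed

lemma consecutive_no_occ_between:
  assumes k: "4 \<le> k" and c: "consecutive k w s t" and r: "s < r" "r < t"
  shows "\<not> occ_uv k w r"
proof
  assume or: "occ_uv k w r"
  have os: "occ_uv k w s" and ot: "occ_uv k w t" and st: "s < t"
    using c by (auto simp: consecutive_def)
  show False
  proof (cases "overlap k s t")
    case True
    hence "t = s + k - 2" "r = s + k - 2"
      using overlap_v_u[OF k os ot st] overlap_v_u[OF k os or r(1)] r by (auto simp: overlap_def)
    thus False using r by simp
  next
    case False
    hence "\<forall>r. occ_uv k w r \<and> s \<le> r \<and> r + k \<le> t + k \<longrightarrow> r = s \<or> r = t"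
      using c by (simp add: consecutive_def)
    thus False using or r by fastforce
  qed
qed

section \<open>Propagation of forbidden positions and a counting principle\<close>

lemma forbidden_shift:
  assumes k: "2 \<le> k" and gap: "\<forall>r. s < r \<and> r < t \<longrightarrow> \<not> occ_uv k w r" and "s < j"
  shows "j + q * k < t + k \<Longrightarrow> forbidden k w j \<Longrightarrow> forbidden k w (j + q * k)"
proof (induction q)
  case (Suc q)
  have "j + q * k < t" using Suc.prems by simp
  hence "\<not> occ_uv k w (j + q * k)" using gap \<open>s < j\<close> by auto
  moreover have "forbidden k w (j + q * k)" using Suc by simp
  ultimately have "forbidden k w (j + q * k + k)" using forbidden_step[OF k] by blast
  thus ?case by (simp add: algebra_simps)
qed simp

definition forbidden_residues :: "nat \<Rightarrow> word \<Rightarrow> nat \<Rightarrow> nat set" where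
  "forbidden_residues k w a = (\<lambda>i. (a + i) mod k) ` Floc k w a"

lemma window_residue_inj:
  fixes a i i' k :: nat
  assumes "i < k" "i' < k" "(a + i) mod k = (a + i') mod k"
  shows "i = i'"
proof -
  have "[a + i = a + i'] (mod k)" using assms(3) by (simp add: cong_def)
  hence "[i = i'] (mod k)" by (simp add: cong_add_lcancel_nat)
  thus ?thesis using assms(1,2) by (rule cong_less_modulus_unique_nat)
qed

lemma inj_on_mod_window: "inj_on (\<lambda>p. p mod k) {a..<a+k::nat}"
proof
  fix p p' assume p: "p \<in> {a..<a+k}" and p': "p' \<in> {a..<a+k}" and eq: "p mod k = p' mod k"
  obtain i i' where "p = a + i" "p' = a + i'" "i < k" "i' < k"
    using p p' by (metis atLeastLessThan_iff le_add_diff_inverse nat_add_left_cancel_less)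
  thus "p = p'" using window_residue_inj[of i k i' a] eq by simp
qed

lemma finite_Floc: "finite (Floc k w a)"
  by (rule finite_subset[of _ "{..<k}"]) (auto simp: Floc_def)

lemma card_forbidden_residues: "card (forbidden_residues k w a) = card (Floc k w a)"
  unfolding forbidden_residues_def
proof (rule card_image, rule inj_onI)
  fix i i' assume "i \<in> Floc k w a" "i' \<in> Floc k w a" "(a + i) mod k = (a + i') mod k"
  thus "i = i'" using window_residue_inj[of i k i' a] by (simp add: Floc_def)
qed

lemma propagate_to_window:
  assumes k: "2 \<le> k" and gap: "\<forall>r. s < r \<and> r < t \<longrightarrow> \<not> occ_uv k w r"
    and "s < p" "p < t + k" "forbidden k w p"
  shows "p mod k \<in> forbidden_residues k w t"
  using assms(3-5)
proof (induction "t - p" arbitrary: p rule: less_induct)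
  case less
  show ?case
  proof (cases "t \<le> p")
    case True
    hence "p - t \<in> Floc k w t" "p mod k = (t + (p - t)) mod k"
      using less.prems by (auto simp: Floc_def)
    thus ?thesis unfolding forbidden_residues_def by (rule image_eqI[rotated])
  next
    case False
    hence "\<not> occ_uv k w p" using gap less.prems by auto
    hence "forbidden k w (p + k)" using forbidden_step[OF k] less.prems by blast
    hence "(p + k) mod k \<in> forbidden_residues k w t"
      using less.hyps[of "p + k"] less.prems False k by auto
    thus ?thesis by simp
  qed
qed

lemma card_le_by_residues:
  assumes "Q \<subseteq> {a..<a+k}" "\<forall>p\<in>Q. p mod k \<in> forbidden_residues k w t"
  shows "card Q \<le> card (Floc k w t)"
proof -
  have "card Q = card ((\<lambda>p. p mod k) ` Q)"
    using card_image[OF inj_on_subset[OF inj_on_mod_window assms(1)]] by simp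
  also have "\<dots> \<le> card (forbidden_residues k w t)"
    using assms(2) finite_Floc by (intro card_mono) (auto simp: forbidden_residues_def)
  finally show ?thesis by (simp add: card_forbidden_residues)
qed

section \<open>When the first occurrence is \<open>v\<close>\<close>

text \<open>A forbidden position inside an occurrence of \<open>v\<close> (other than its first one) starts a
  non-constant block, unless it is the last one and \<open>u\<close> starts just before it; if no
  occurrence starts there either, both continuation positions are forbidden.\<close>

lemma v_forbidden_interior:
  assumes k: "3 \<le> k" and v: "occ k w (vw k) s" and i: "1 \<le> i" "i < k"
    and none: "\<forall>r. s < r \<and> r \<le> s + i \<longrightarrow> \<not> occ_uv k w r"
    and F: "forbidden k w (s+i)"
  shows "forbidden k w (s+i+k-1) \<and> forbidden k w (s+i+k)"
proof -
  have k2: "2 \<le> k" using k by simp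
  have "\<not> const_block k w (s+i)"
  proof (cases "i \<le> k - 2")
    case True
    have "w!(s+i+0) = B" "w!(s+i+(k-1-i)) = A"
      using v_letter[OF v, of i] v_letter[OF v, of "k-1"] True i by auto
    thus ?thesis using not_const_block[of 0 k "k-1-i" w "s+i"] True i by auto
  next
    case False
    hence last: "i = k - 1" using i by simp
    show ?thesis
    proof
      assume "const_block k w (s+i)"
      moreover have "w!(Suc (s+k-2)) = A" "w!(s+k-2) = B"
        using v_letter[OF v, of "k-1"] v_letter[OF v, of "k-2"] k
        by (auto simp: Suc_diff_Suc numeral_2_eq_2)
      moreover have "s + k - 2 + k \<le> length w" using forbidden_length[OF k2 F] last by simp
      ultimately have "occ k w (uw k) (s+k-2)"
        using const_block_A_occ_u[OF k2, of w "s+k-2"] last k by (simp add: Suc_diff_Suc numeral_2_eq_2)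
      moreover have "s < s + k - 2" "s + k - 2 \<le> s + i" using last k by auto
      ultimately show False using none by (auto simp: occ_uv_def)
    qed
  qed
  moreover have "\<not> occ_uv k w (s+i)" using none i by simp
  ultimately show ?thesis using forbidden_rec[OF k2, of w "s+i"] F by simp
qed

lemma v_shifted_forbidden:
  assumes k: "4 \<le> k" and vs: "occ k w (vw k) s"
    and none: "\<forall>r. s < r \<and> r < s + k \<longrightarrow> \<not> occ_uv k w r"
    and i0: "i0 \<in> Floc k w s" "i0 \<noteq> 0" and i: "i \<in> Floc k w s"
  shows "forbidden k w (s + k + (if i = 0 then i0 - 1 else i))"
proof -
  have shift: "forbidden k w (s+j+k-1) \<and> forbidden k w (s+j+k)"
    if "j \<in> Floc k w s" "j \<noteq> 0" for j
    using that v_forbidden_interior[OF _ vs, of j] none k by (auto simp: Floc_def)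
  show ?thesis
  proof (cases "i = 0")
    case True
    have "s + i0 + k - 1 = s + k + (i0 - 1)" using i0 by simp
    thus ?thesis using shift[OF i0] True by simp
  next
    case False
    thus ?thesis using shift[OF i False] by (simp add: add.commute add.left_commute)
  qed
qed

text \<open>If \<open>v\<close> at \<open>s\<close> is followed, without overlap, by the next occurrence at \<open>t\<close>, then
  \<open>|F\<^sub>s| \<le> |F\<^sub>t|\<close>: with \<open>i\<^sub>0\<close> the least forbidden local position \<open>\<noteq> 0\<close>, the shifted positions
  above are distinct and lie in one window, and their residues reappear in the window of \<open>t\<close>.\<close>

lemma v_then_apart:
  assumes k: "4 \<le> k" and mu: "min_uncompletable k w"
    and vs: "occ k w (vw k) s" and ot: "occ_uv k w t" and st: "s + k \<le> t"
    and gap: "\<forall>r. s < r \<and> r < t \<longrightarrow> \<not> occ_uv k w r"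
  shows "card (Floc k w s) \<le> card (Floc k w t)"
proof (cases "Floc k w s - {0} = {}")
  case True
  hence "card (Floc k w s) \<le> card {0::nat}" by (intro card_mono) auto
  moreover have "card (Floc k w t) \<noteq> 0"
    using Floc_nonempty[OF k mu ot] finite_Floc[of k w t] by simp
  ultimately show ?thesis by simp
next
  case False
  define i0 where "i0 = Min (Floc k w s - {0})"
  have fin: "finite (Floc k w s - {0})" using finite_Floc by simp
  have i0: "i0 \<in> Floc k w s" "i0 \<noteq> 0" using Min_in[OF fin False] by (auto simp: i0_def)
  have i0_least: "i0 \<le> i" if "i \<in> Floc k w s" "i \<noteq> 0" for i
    using Min_le[OF fin] that by (simp add: i0_def)
  define e where "e = (\<lambda>i. if i = 0 then i0 - 1 else i)"
  define Q where "Q = (\<lambda>i. s + k + e i) ` Floc k w s"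
  have e_lt: "e i < k" if "i \<in> Floc k w s" for i
    using that i0 by (auto simp: e_def Floc_def)
  have e0_less: "e 0 < e i" if "i \<in> Floc k w s" "i \<noteq> 0" for i
    using i0_least[OF that] i0(2) that(2) by (simp add: e_def)
  have "inj_on e (Floc k w s)"
  proof
    fix i i' assume "i \<in> Floc k w s" "i' \<in> Floc k w s" "e i = e i'"
    thus "i = i'" using e0_less[of i] e0_less[of i'] by (cases "i = 0"; cases "i' = 0") (auto simp: e_def)
  qed
  hence "card Q = card (Floc k w s)"
    unfolding Q_def by (subst card_image) (auto simp: inj_on_def)
  moreover have "Q \<subseteq> {s+k..<s+k+k}" using e_lt by (auto simp: Q_def)
  moreover have "p mod k \<in> forbidden_residues k w t" if "p \<in> Q" for p
  proof -
    obtain i where i: "i \<in> Floc k w s" "p = s + k + e i" using \<open>p \<in> Q\<close> by (auto simp: Q_def)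
    have "\<forall>r. s < r \<and> r < s + k \<longrightarrow> \<not> occ_uv k w r" using gap st by auto
    hence "forbidden k w p" using v_shifted_forbidden[OF k vs _ i0 i(1)] i(2) by (simp add: e_def)
    moreover have "s < p" "p < t + k" using i e_lt[OF i(1)] st k by auto
    ultimately show ?thesis using propagate_to_window[of k s t w p] gap k by simp
  qed
  ultimately show ?thesis using card_le_by_residues[of Q "s+k" k w t] by simp
qed

text \<open>Local positions
  \<open>k - 2\<close> and \<open>k - 1\<close> of \<open>s\<close> are the positions \<open>0\<close> and \<open>1\<close> of \<open>t\<close>, and a forbidden
  position \<open>i\<close> in between, \<open>1 \<le> i \<le> k - 3\<close>, forces \<open>i + 1\<close> and \<open>i + 2\<close> to be
  forbidden in \<open>t\<close>.\<close>

lemma overlap_interior: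
  assumes k: "4 \<le> k" and vs: "occ k w (vw k) s" and ts: "t = s + k - 2"
    and gap: "\<forall>r. s < r \<and> r < t \<longrightarrow> \<not> occ_uv k w r"
    and i: "1 \<le> i" "i \<le> k - 3" and F: "forbidden k w (s+i)"
  shows "forbidden k w (t+i+1) \<and> forbidden k w (t+i+2)"
proof -
  have "\<forall>r. s < r \<and> r \<le> s + i \<longrightarrow> \<not> occ_uv k w r" using gap i ts by auto
  hence "forbidden k w (s+i+k-1) \<and> forbidden k w (s+i+k)"
    using v_forbidden_interior[OF _ vs i(1) _ _ F] i k by simp
  moreover have "s+i+k-1 = t+i+1" "s+i+k = t+i+2" using ts k by auto
  ultimately show ?thesis by simp
qed

text \<open>If some local position \<open>m \<ge> 2\<close> of \<open>t\<close> were forbidden, then sending \<open>0\<close> to the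
  least such \<open>m\<close>, \<open>k - 2\<close> and \<open>k - 1\<close> to \<open>0\<close> and \<open>1\<close>, and every other \<open>i\<close> to \<open>i + 2\<close>
  would inject \<open>F\<^sub>s\<close> into \<open>F\<^sub>t\<close>.\<close>

lemma overlap_tail_free:
  assumes k: "4 \<le> k" and vs: "occ k w (vw k) s" and ts: "t = s + k - 2"
    and gap: "\<forall>r. s < r \<and> r < t \<longrightarrow> \<not> occ_uv k w r"
    and cd: "card (Floc k w t) < card (Floc k w s)"
    and m: "2 \<le> m" "m < k"
  shows "\<not> forbidden k w (t+m)"
proof
  assume "forbidden k w (t+m)"
  define X where "X = {m. 2 \<le> m \<and> m < k \<and> forbidden k w (t+m)}"
  define m0 where "m0 = Min X"
  have finX: "finite X" by (rule finite_subset[of _ "{..<k}"]) (auto simp: X_def)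
  have "X \<noteq> {}" using m \<open>forbidden k w (t+m)\<close> by (auto simp: X_def)
  hence m0X: "m0 \<in> X" using Min_in[OF finX] by (simp add: m0_def)
  have m0_least: "m0 < i + 2" if "i \<in> Floc k w s" "1 \<le> i" "i \<le> k - 3" for i
  proof -
    have "i + 1 \<in> X"
      using overlap_interior[OF k vs ts gap, of i] that k by (auto simp: X_def Floc_def add.assoc)
    thus ?thesis using Min_le[OF finX] by (fastforce simp: m0_def)
  qed
  define h where "h = (\<lambda>i. if i = 0 then m0 else if i = k-2 then 0 else if i = k-1 then 1 else i+2)"
  have h_into: "h i \<in> Floc k w t" if iF: "i \<in> Floc k w s" for i
  proof -
    consider "i = 0" | "i = k - 2" | "i = k - 1" | "1 \<le> i" "i \<le> k - 3"
      using iF k by (fastforce simp: Floc_def)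
    thus ?thesis
    proof cases
      case 4
      thus ?thesis using overlap_interior[OF k vs ts gap, of i] iF k
        by (auto simp: h_def Floc_def add.assoc)
    qed (use m0X iF ts k in \<open>auto simp: h_def X_def Floc_def\<close>)
  qed
  have h_cases: "(i = 0 \<and> h i = m0) \<or> (i = k-2 \<and> h i = 0) \<or> (i = k-1 \<and> h i = 1) \<or>
                 (h i = i + 2 \<and> m0 < i + 2)" if "i \<in> Floc k w s" for i
    using m0_least[OF that] that k by (auto simp: h_def Floc_def)
  have "inj_on h (Floc k w s)"
  proof
    fix i j assume "i \<in> Floc k w s" "j \<in> Floc k w s" "h i = h j"
    moreover have "2 \<le> m0" using m0X by (simp add: X_def)
    ultimately show "i = j" using h_cases[of i] h_cases[of j] k by fastforce
  qed
  hence "card (Floc k w s) \<le> card (Floc k w t)"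
    using h_into finite_Floc by (intro card_inj_on_le) auto
  thus False using cd by simp
qed

text \<open>Case (ii): since \<open>F\<^sub>t\<close> is non-empty and no local position \<open>\<ge> 2\<close> of \<open>t\<close> is forbidden,
  \<open>F\<^sub>t = {1}\<close> and \<open>F\<^sub>s = {0, k - 1}\<close>.\<close>

lemma overlap_case:
  assumes k: "4 \<le> k" and mu: "min_uncompletable k w"
    and vs: "occ k w (vw k) s" and ut: "occ k w (uw k) t" and ts: "t = s + k - 2"
    and gap: "\<forall>r. s < r \<and> r < t \<longrightarrow> \<not> occ_uv k w r"
    and cd: "card (Floc k w t) < card (Floc k w s)"
  shows "Floc k w s = {0, k-1} \<and> Floc k w t = {1}"
proof -
  note tail = overlap_tail_free[OF k vs ts gap cd]
  have "\<not> forbidden k w (t + (k-1))" using tail[of "k-1"] k by simp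
  hence not_t: "\<not> forbidden k w t" using forbidden_u[of k w t] ut k by simp
  have not_mid: "\<not> forbidden k w (s+i)" if "1 \<le> i" "i \<le> k - 3" for i
  proof
    assume "forbidden k w (s+i)"
    hence "forbidden k w (t+(i+2))" using overlap_interior[OF k vs ts gap that] by (simp add: add.assoc)
    moreover have "2 \<le> i + 2" "i + 2 < k" using that k by linarith+
    ultimately show False using tail by blast
  qed
  have t_eq: "Floc k w t = {1}"
  proof -
    have "Floc k w t \<subseteq> {1}"
    proof
      fix y assume "y \<in> Floc k w t"
      hence "y < k" "forbidden k w (t+y)" by (auto simp: Floc_def)
      thus "y \<in> {1}" using not_t tail[of y] by (cases "y = 0"; cases "y = 1") auto
    qed
    thus ?thesis using Floc_nonempty[OF k mu] ut by (auto simp: occ_uv_def)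
  qed
  have s_sub: "Floc k w s \<subseteq> {0, k-2, k-1}"
  proof
    fix i assume "i \<in> Floc k w s"
    hence "i < k" "forbidden k w (s+i)" by (auto simp: Floc_def)
    moreover have "\<not> (1 \<le> i \<and> i \<le> k - 3)" using not_mid[of i] calculation by blast
    ultimately have "i = 0 \<or> i = k - 2 \<or> i = k - 1" by arith
    thus "i \<in> {0, k-2, k-1}" by blast
  qed
  have pos: "s + (k-2) = t" "s + (k-1) = t + 1" using ts k by auto
  have "1 \<in> Floc k w t" using t_eq by simp
  hence "forbidden k w (s + (k-1))" using pos by (simp add: Floc_def)
  hence "k - 1 \<in> Floc k w s" using k by (simp add: Floc_def)
  moreover have "0 \<in> Floc k w s" using forbidden_v[OF _ vs] k by (simp add: Floc_def)
  moreover have "k - 2 \<notin> Floc k w s" using not_t pos by (simp add: Floc_def)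
  ultimately have "Floc k w s = {0, k-1}" using s_sub by blast
  thus ?thesis using t_eq by simp
qed

section \<open>When the first occurrence is \<open>u\<close>: periodicity\<close>

definition forbidden_periodic :: "nat \<Rightarrow> word \<Rightarrow> nat \<Rightarrow> nat \<Rightarrow> bool" where
  "forbidden_periodic k w s t \<longleftrightarrow> (\<forall>j. s < j \<longrightarrow> j < t + k \<longrightarrow>
     (forbidden k w j \<longleftrightarrow> (j - s) mod k \<noteq> 0 \<and> forbidden k w (s + (j - s) mod k)))"

lemma forbidden_periodicD:
  "forbidden_periodic k w s t \<Longrightarrow> s < j \<Longrightarrow> j < t + k \<Longrightarrow> (j - s) mod k = x \<Longrightarrow>
     forbidden k w j \<longleftrightarrow> x \<noteq> 0 \<and> forbidden k w (s + x)"
  unfolding forbidden_periodic_def by blast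

text \<open>If \<open>u\<close> at \<open>s\<close> is followed, without overlap, by the next occurrence at \<open>t\<close> and
  \<open>|F\<^sub>s| > |F\<^sub>t|\<close>, the counting principle leaves no room: the last position of \<open>s\<close> (hence
  \<open>s\<close> itself) is forbidden, and the residues of the other forbidden positions of \<open>s\<close> are
  exactly the forbidden residues of the window of \<open>t\<close>.\<close>

lemma u_then_apart_residues:
  assumes k: "4 \<le> k" and us: "occ k w (uw k) s" and st: "s + k \<le> t"
    and gap: "\<forall>r. s < r \<and> r < t \<longrightarrow> \<not> occ_uv k w r"
    and cd: "card (Floc k w t) < card (Floc k w s)"
  shows "forbidden k w (s+k-1)"
    and "forbidden_residues k w t = (\<lambda>i. (s + i) mod k) ` (Floc k w s - {0})"
proof -
  define P where "P = Floc k w s - {0}"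
  have k2: "2 \<le> k" and k3: "3 \<le> k" using k by auto
  have P_res: "(s + i) mod k \<in> forbidden_residues k w t" if "i \<in> P" for i
    using that propagate_to_window[OF k2 gap, of "s+i"] st by (auto simp: P_def Floc_def)
  have card_P: "card ((+) s ` P) = card P" by (simp add: card_image)
  show last: "forbidden k w (s+k-1)"
  proof (rule ccontr)
    assume "\<not> forbidden k w (s+k-1)"
    hence "\<not> forbidden k w s" using forbidden_u[OF k3 us] by simp
    hence "P = Floc k w s" by (auto simp: P_def Floc_def)
    moreover have "card ((+) s ` P) \<le> card (Floc k w t)"
      using P_res by (intro card_le_by_residues[of _ "s+1"]) (auto simp: P_def Floc_def)
    ultimately show False using card_P cd by simp
  qed
  have "0 \<in> Floc k w s" using forbidden_u[OF k3 us] last k by (simp add: Floc_def)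
  hence "card P = card (Floc k w s) - 1" by (simp add: P_def finite_Floc)
  moreover have "card ((\<lambda>i. (s + i) mod k) ` P) = card P"
    by (rule card_image, rule inj_onI) (auto simp: P_def Floc_def dest: window_residue_inj)
  ultimately have "card (forbidden_residues k w t) \<le> card ((\<lambda>i. (s + i) mod k) ` P)"
    using cd card_forbidden_residues[of k w t] by simp
  moreover have "(\<lambda>i. (s + i) mod k) ` P \<subseteq> forbidden_residues k w t" using P_res by auto
  moreover have "finite (forbidden_residues k w t)"
    by (simp add: forbidden_residues_def finite_Floc)
  ultimately show "forbidden_residues k w t = (\<lambda>i. (s + i) mod k) ` (Floc k w s - {0})"
    unfolding P_def[symmetric] by (metis card_seteq)
qed

lemma u_then_apart_periodic:
  assumes k: "4 \<le> k" and us: "occ k w (uw k) s" and st: "s + k \<le> t"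
    and gap: "\<forall>r. s < r \<and> r < t \<longrightarrow> \<not> occ_uv k w r"
    and cd: "card (Floc k w t) < card (Floc k w s)"
  shows "forbidden_periodic k w s t"
  unfolding forbidden_periodic_def
proof (intro allI impI)
  fix j assume sj: "s < j" and jt: "j < t + k"
  define r where "r = (j - s) mod k"
  have k2: "2 \<le> k" using k by simp
  have r_res: "(s + r) mod k = j mod k"
    using sj by (simp add: r_def mod_add_right_eq)
  show "forbidden k w j \<longleftrightarrow> r \<noteq> 0 \<and> forbidden k w (s + r)"
  proof
    assume "forbidden k w j"
    hence "j mod k \<in> (\<lambda>i. (s + i) mod k) ` (Floc k w s - {0})"
      using propagate_to_window[OF k2 gap sj jt] u_then_apart_residues(2)[OF k us st gap cd] by simp
    then obtain i where i: "i \<in> Floc k w s - {0}" "j mod k = (s + i) mod k" by blast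
    hence "i = r" using window_residue_inj[of i k r s] r_res k by (simp add: Floc_def r_def)
    thus "r \<noteq> 0 \<and> forbidden k w (s + r)" using i by (simp add: Floc_def)
  next
    assume a: "r \<noteq> 0 \<and> forbidden k w (s + r)"
    have j_eq: "j = s + r + (j - s) div k * k" using sj by (simp add: r_def)
    have lt: "s + r + (j - s) div k * k < t + k" using j_eq jt by linarith
    have "forbidden k w (s + r + (j - s) div k * k)"
      using forbidden_shift[OF k2 gap _ lt] a by simp
    thus "forbidden k w j" using j_eq by simp
  qed
qed

lemma periodic_descent:
  assumes k: "2 \<le> k" and per: "forbidden_periodic k w s t"
    and j: "s < j" "j < t" and nK: "\<not> const_block k w j" and r: "(j - s) mod k = r" "1 \<le> r"
    and F: "forbidden k w (s + r)"
  shows "2 \<le> r \<and> forbidden k w (s + (r - 1))"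
proof -
  have "forbidden k w j" using forbidden_periodicD[OF per j(1) _ r(1)] j F r by simp
  hence "forbidden k w (j + k - 1)" using forbidden_step1[OF k _ nK] by blast
  moreover have "(j + k - 1 - s) mod k = r - 1"
  proof -
    have "j + k - 1 - s = (j - s) + (k - 1)" using j k by simp
    hence "(j + k - 1 - s) mod k = ((j - s) mod k + (k - 1)) mod k" by (simp add: mod_add_left_eq)
    hence "(j + k - 1 - s) mod k = (r + (k - 1)) mod k" using r(1) by simp
    moreover have "r + (k - 1) = (r - 1) + k" using r(2) k by simp
    ultimately have "(j + k - 1 - s) mod k = (r - 1) mod k" by simp
    moreover have "r < k" using r(1) k by auto
    hence "r - 1 < k" by simp
    ultimately show ?thesis by simp
  qed
  moreover have "s < j + k - 1" "j + k - 1 < t + k" using j k by auto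
  ultimately have "r - 1 \<noteq> 0 \<and> forbidden k w (s + (r - 1))"
    using forbidden_periodicD[OF per] by blast
  moreover have "r - 1 \<noteq> 0 \<Longrightarrow> 2 \<le> r" by simp
  ultimately show ?thesis by blast
qed

lemma residue_avoiding_two:
  fixes D k x r :: nat
  assumes "k \<le> D" "D mod k = x" "1 \<le> r" "r < k" "r \<noteq> x" "r \<noteq> x + 1"
  shows "\<exists>i. 1 \<le> i \<and> i \<le> k - 2 \<and> (D - i) mod k = r"
proof -
  define i where "i = (if r < x then x - r else k + x - r)"
  have x: "x < k" using assms by auto
  have i: "1 \<le> i" "i \<le> k - 2" using assms x by (auto simp: i_def)
  have "(r + i) mod k = x" using assms x by (auto simp: i_def)
  moreover have "(D - i + i) mod k = x" using assms i by simp
  ultimately have "[D - i + i = r + i] (mod k)" by (simp add: cong_def)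
  hence "[D - i = r] (mod k)" by (simp only: cong_add_rcancel_nat)
  hence "(D - i) mod k = r mod k" by (simp add: cong_def)
  thus ?thesis using i assms by auto
qed

lemma forbidden_final_interval:
  assumes k: "4 \<le> k" and per: "forbidden_periodic k w s t" and last: "forbidden k w (s+k-1)"
    and p: "s + k \<le> p" "p \<le> t"
    and nK: "\<And>i. 1 \<le> i \<Longrightarrow> i \<le> k - 2 \<Longrightarrow> \<not> const_block k w (p - i)"
  shows "\<exists>c. 1 \<le> c \<and> c < k \<and> (p - s) mod k \<le> c \<and> c \<le> (p - s) mod k + 1 \<and>
             (\<forall>r. 1 \<le> r \<longrightarrow> r < k \<longrightarrow> forbidden k w (s + r) \<longleftrightarrow> c \<le> r)"
proof -
  define x where "x = (p - s) mod k"
  have x: "x < k" using k by (simp add: x_def)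
  have step: "2 \<le> r \<and> forbidden k w (s + (r - 1))"
    if r: "1 \<le> r" "r < k" "r \<noteq> x" "r \<noteq> x + 1" and F: "forbidden k w (s + r)" for r
  proof -
    have "k \<le> p - s" using p by simp
    then obtain i where i: "1 \<le> i" "i \<le> k - 2" "(p - s - i) mod k = r"
      using residue_avoiding_two[of k "p - s" x r] r unfolding x_def by blast
    have "p - i - s = p - s - i" by simp
    hence "(p - i - s) mod k = r" using i by simp
    thus ?thesis using periodic_descent[OF _ per _ _ nK[OF i(1,2)]] i p k r F by simp
  qed
  have low: "\<not> forbidden k w (s + r)" if "1 \<le> r" "r < x" for r
    using that
  proof (induction r rule: nat_induct_at_least)
    case base thus ?case using step[of 1] x by auto
  next
    case (Suc n) thus ?case using step[of "Suc n"] x by auto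
  qed
  have high: "forbidden k w (s + (k - 1 - n))" if "n \<le> k - 2 - x" for n
    using that
  proof (induction n)
    case 0 thus ?case using last k by simp
  next
    case (Suc n)
    hence "2 \<le> k - 1 - n \<and> forbidden k w (s + (k - 1 - n - 1))"
      using step[of "k - 1 - n"] x k by simp
    thus ?case by (simp add: diff_Suc)
  qed
  have high': "forbidden k w (s + r)" if "x < r" "r < k" for r
    using high[of "k - 1 - r"] that by simp
  define c where "c = (if x \<noteq> 0 \<and> forbidden k w (s + x) then x else x + 1)"
  have "c < k" using last x k by (cases "x = k - 1") (auto simp: c_def)
  moreover have "forbidden k w (s + r) \<longleftrightarrow> c \<le> r" if "1 \<le> r" "r < k" for r
    using low[of r] high'[of r] that by (cases "r < x"; cases "r = x") (auto simp: c_def)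
  ultimately show ?thesis by (intro exI[of _ c]) (auto simp: c_def x_def)
qed

lemma Floc_from_interval:
  assumes per: "forbidden_periodic k w s t" and st: "s < t" and c: "1 \<le> c"
    and int: "\<And>r. 1 \<le> r \<Longrightarrow> r < k \<Longrightarrow> forbidden k w (s + r) \<longleftrightarrow> c \<le> r"
  shows "Floc k w t = {y. y < k \<and> ((t - s) mod k + y) mod k \<noteq> 0 \<and> c \<le> ((t - s) mod k + y) mod k}"
proof (rule set_eqI)
  fix y
  have "y < k \<Longrightarrow> (t + y - s) mod k = ((t - s) mod k + y) mod k"
    using st by (simp add: mod_add_left_eq)
  moreover have "y < k \<Longrightarrow> ((t - s) mod k + y) mod k < k" by simp
  ultimately show "y \<in> Floc k w t \<longleftrightarrow> y \<in> {y. y < k \<and> ((t - s) mod k + y) mod k \<noteq> 0 \<and>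
                     c \<le> ((t - s) mod k + y) mod k}"
    using forbidden_periodicD[OF per, of "t + y"] int c st by (auto simp: Floc_def)
qed

lemma Floc_of_final_interval:
  assumes "forbidden k w s" "1 \<le> c" "c < k"
    and int: "\<And>r. 1 \<le> r \<Longrightarrow> r < k \<Longrightarrow> forbidden k w (s + r) \<longleftrightarrow> c \<le> r"
  shows "Floc k w s = {0} \<union> {c..k - 1}"
proof (rule set_eqI)
  fix i show "i \<in> Floc k w s \<longleftrightarrow> i \<in> {0} \<union> {c..k - 1}"
  proof (cases "i = 0")
    case True thus ?thesis using assms(1-3) by (auto simp: Floc_def)
  next
    case False thus ?thesis using int[of i] assms(2) by (auto simp: Floc_def)
  qed
qed

lemma u_then_apart_shape:
  assumes k: "4 \<le> k" and us: "occ k w (uw k) s" and st: "s + k \<le> t"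
    and gap: "\<forall>r. s < r \<and> r < t \<longrightarrow> \<not> occ_uv k w r"
    and cd: "card (Floc k w t) < card (Floc k w s)"
    and p: "s + k \<le> p" "p \<le> t"
    and nK: "\<And>i. 1 \<le> i \<Longrightarrow> i \<le> k - 2 \<Longrightarrow> \<not> const_block k w (p - i)"
  obtains c where "1 \<le> c" "c < k" "(p - s) mod k \<le> c" "c \<le> (p - s) mod k + 1"
    "Floc k w s = {0} \<union> {c..k - 1}"
    "Floc k w t = {y. y < k \<and> ((t - s) mod k + y) mod k \<noteq> 0 \<and> c \<le> ((t - s) mod k + y) mod k}"
proof -
  have per: "forbidden_periodic k w s t" using u_then_apart_periodic[OF k us st gap cd] .
  have last: "forbidden k w (s+k-1)" using u_then_apart_residues(1)[OF k us st gap cd] .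
  hence first: "forbidden k w s" using forbidden_u[of k w s] us k by simp
  obtain c where c: "1 \<le> c" "c < k" "(p - s) mod k \<le> c" "c \<le> (p - s) mod k + 1"
    and int: "\<And>r. 1 \<le> r \<Longrightarrow> r < k \<Longrightarrow> forbidden k w (s + r) \<longleftrightarrow> c \<le> r"
    using forbidden_final_interval[OF k per last p nK] by blast
  show ?thesis
    using that[OF c Floc_of_final_interval[OF first c(1,2) int]]
      Floc_from_interval[OF per _ c(1) int] st k by simp
qed

lemma mod_add_below:
  fixes d y k :: nat
  assumes "d < k" "y < k"
  shows "(d + y) mod k = (if d + y < k then d + y else d + y - k)"
  using assms by (auto simp: mod_if le_mod_geq)

lemma residue_set_one_interval:
  fixes d k :: nat
  assumes "d + 1 < k"
  shows "{y. y < k \<and> (d + y) mod k \<noteq> 0 \<and> d + 1 \<le> (d + y) mod k} = {1..k - 1 - d}"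
  using assms mod_add_below[of d k] by (auto split: if_splits)

lemma residue_set_two_intervals:
  fixes c d k :: nat
  assumes "1 \<le> c" "c \<le> d" "d < k"
  shows "{y. y < k \<and> (d + y) mod k \<noteq> 0 \<and> c \<le> (d + y) mod k} = {0..k - 1 - d} \<union> {k - d + c..k - 1}"
  using assms mod_add_below[of d k] by (auto split: if_splits; arith)

text \<open>For \<open>u\<close> at \<open>t\<close>, the blocks starting at \<open>t - i\<close>, \<open>1 \<le> i \<le> k - 2\<close>, contain the
  factor \<open>ba\<close> at \<open>t\<close> or, for \<open>i = k - 2\<close>, would otherwise create an occurrence of \<open>v\<close> at
  \<open>t - i\<close>.\<close>

lemma u_anchor:
  assumes k: "4 \<le> k" and ut: "occ k w (uw k) t" and st: "s + k \<le> t"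
    and gap: "\<forall>r. s < r \<and> r < t \<longrightarrow> \<not> occ_uv k w r"
    and i: "1 \<le> i" "i \<le> k - 2"
  shows "\<not> const_block k w (t - i)"
proof
  assume block: "const_block k w (t - i)"
  have wt: "w!(t - i + i) = B" "w!(t - i + (i + 1)) = A"
    using u_letter[OF ut, of 0] u_letter[OF ut, of 1] i st k by auto
  have "i = k - 2"
  proof (rule ccontr)
    assume "i \<noteq> k - 2"
    hence "\<not> const_block k w (t - i)" using not_const_block[of i k "i+1" w "t-i"] wt i by auto
    thus False using block by simp
  qed
  have "w!(t - i) = B" using block wt i k by (simp add: const_block_def)
  moreover have "t - i + k - 1 = t - i + (i + 1)" using \<open>i = k - 2\<close> k by simp
  hence "w!(t - i + k - 1) = A" using wt by simp
  moreover have "t - i + k \<le> length w" using occ_length[OF ut] \<open>i = k - 2\<close> k by simp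
  ultimately have "occ k w (vw k) (t - i)" using const_block_B_occ_v[OF _ block] k by simp
  moreover have "s < t - i" "t - i < t" using i st k by auto
  ultimately show False using gap by (auto simp: occ_uv_def)
qed

text \<open>For \<open>u\<close> at \<open>s\<close>, the first \<open>b\<close> after \<open>s\<close> (which exists up to \<open>t\<close> when \<open>w[t] = b\<close>)
  follows a run of \<open>a\<close>'s of length \<open>\<ge> k - 1\<close>, so the blocks ending right before it are
  non-constant.\<close>

lemma u_first_b_anchor:
  assumes k: "4 \<le> k" and us: "occ k w (uw k) s" and st: "s + k \<le> t" and wt: "w!t = B"
  obtains p where "s + k \<le> p" "p \<le> t" "\<And>i. 1 \<le> i \<Longrightarrow> i \<le> k - 2 \<Longrightarrow> \<not> const_block k w (p - i)"
proof -
  define m where "m = (LEAST m. w!(s+k+m) = B)"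
  have mB: "w!(s+k+m) = B" and m_le: "m \<le> t - s - k"
    using LeastI[of "\<lambda>m. w!(s+k+m) = B" "t-s-k"] Least_le[of "\<lambda>m. w!(s+k+m) = B" "t-s-k"]
      wt st by (auto simp: m_def)
  have as: "w!(s+q) = A" if "1 \<le> q" "q < k + m" for q
  proof (cases "q < k")
    case True thus ?thesis using u_letter[OF us, of q] that by simp
  next
    case False
    hence "w!(s+k+(q-k)) \<noteq> B"
      using not_less_Least[of "q - k" "\<lambda>m. w!(s+k+m) = B"] that by (simp add: m_def)
    moreover have "s+k+(q-k) = s+q" using False by simp
    ultimately show ?thesis by (cases "w!(s+q)") auto
  qed
  show ?thesis
  proof (rule that[of "s+k+m"])
    fix i assume i: "1 \<le> i" "i \<le> k - 2"
    have "w!(s+k+m-i+0) = A" using as[of "k+m-i"] i k by (simp add: add.assoc)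
    moreover have "w!(s+k+m-i+i) = B" using mB i k by simp
    ultimately show "\<not> const_block k w (s+k+m-i)"
      using not_const_block[of 0 k i w "s+k+m-i"] i k by auto
  qed (use m_le st in auto)
qed

text \<open>Anchoring at \<open>t\<close> itself gives \<open>c \<in> {d, d + 1}\<close> for \<open>d = (t - s) mod k\<close>;
  since \<open>u\<close> at \<open>t\<close> has its first and last local positions both forbidden or both not,
  \<open>d \<noteq> 0\<close> and \<open>c = d + 1\<close>.\<close>

lemma u_then_u:
  assumes k: "4 \<le> k" and us: "occ k w (uw k) s" and ut: "occ k w (uw k) t" and st: "s + k \<le> t"
    and gap: "\<forall>r. s < r \<and> r < t \<longrightarrow> \<not> occ_uv k w r"
    and cd: "card (Floc k w t) < card (Floc k w s)"
  shows "\<exists>j. 1 \<le> j \<and> j \<le> k - 2 \<and> Floc k w s = {0} \<union> {k - j..k - 1} \<and> Floc k w t = {1..j}"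
proof -
  obtain c where c: "1 \<le> c" "c < k" "(t - s) mod k \<le> c" "c \<le> (t - s) mod k + 1"
    and Fs: "Floc k w s = {0} \<union> {c..k - 1}"
    and Ft: "Floc k w t = {y. y < k \<and> ((t - s) mod k + y) mod k \<noteq> 0 \<and> c \<le> ((t - s) mod k + y) mod k}"
    by (rule u_then_apart_shape[OF k us st gap cd st order.refl u_anchor[OF k ut st gap]])
  define d where "d = (t - s) mod k"
  note c = c[folded d_def] and Ft = Ft[folded d_def]
  have u_t: "0 \<in> Floc k w t \<longleftrightarrow> k - 1 \<in> Floc k w t"
    using forbidden_u[of k w t] ut k by (simp add: Floc_def)
  have d: "d < k" using k by (simp add: d_def)
  have "d \<noteq> 0"
  proof
    assume "d = 0"
    thus False using u_t c k unfolding Ft by simp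
  qed
  hence "(d + (k - 1)) mod k = d - 1" using d mod_add_below[of d k "k-1"] by simp
  hence "c = d + 1" using u_t c \<open>d \<noteq> 0\<close> d unfolding Ft by auto
  show ?thesis
  proof (intro exI conjI)
    show "1 \<le> k - 1 - d" "k - 1 - d \<le> k - 2" using c \<open>d \<noteq> 0\<close> \<open>c = d + 1\<close> by auto
    show "Floc k w t = {1..k - 1 - d}"
      unfolding Ft \<open>c = d + 1\<close> using residue_set_one_interval[of d k] c \<open>c = d + 1\<close> by simp
    show "Floc k w s = {0} \<union> {k - (k - 1 - d)..k - 1}"
      using Fs \<open>c = d + 1\<close> d by simp
  qed
qed

text \<open>Anchoring at the first \<open>b\<close> after \<open>u\<close> gives some \<open>c\<close>; since \<open>v\<close> at \<open>t\<close>
  is forbidden, \<open>1 \<le> c \<le> d\<close>, and \<open>i = k - 1 - d\<close>, \<open>j = k - d + c\<close> describe both sets.\<close>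

lemma u_then_v:
  assumes k: "4 \<le> k" and us: "occ k w (uw k) s" and vt: "occ k w (vw k) t" and st: "s + k \<le> t"
    and gap: "\<forall>r. s < r \<and> r < t \<longrightarrow> \<not> occ_uv k w r"
    and cd: "card (Floc k w t) < card (Floc k w s)"
  shows "\<exists>i j. i < j \<and> j \<le> k \<and> j \<noteq> i + 1 \<and>
               Floc k w t = {0..i} \<union> {j..k - 1} \<and>
               Floc k w s = {0} \<union> {j - i - 1..k - 1} \<and>
               [int t - (int s + int k) = int (k - 1 - i)] (mod int k)"
proof -
  have "w!t = B" using v_letter[OF vt, of 0] k by simp
  then obtain p where p: "s + k \<le> p" "p \<le> t"
    and nK: "\<And>i. 1 \<le> i \<Longrightarrow> i \<le> k - 2 \<Longrightarrow> \<not> const_block k w (p - i)"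
    using u_first_b_anchor[OF k us st] by blast
  obtain c where c: "1 \<le> c" "c < k" "(p - s) mod k \<le> c" "c \<le> (p - s) mod k + 1"
    and Fs: "Floc k w s = {0} \<union> {c..k - 1}"
    and Ft: "Floc k w t = {y. y < k \<and> ((t - s) mod k + y) mod k \<noteq> 0 \<and> c \<le> ((t - s) mod k + y) mod k}"
    by (rule u_then_apart_shape[OF k us st gap cd p nK])
  define d where "d = (t - s) mod k"
  note Ft = Ft[folded d_def]
  have d: "d < k" using k by (simp add: d_def)
  have "0 \<in> Floc k w t" using forbidden_v[OF _ vt] k by (simp add: Floc_def)
  hence cd': "1 \<le> d" "c \<le> d" using d unfolding Ft by auto
  have cong: "[int t - (int s + int k) = int d] (mod int k)"
  proof -
    have "int t - (int s + int k) = int (t - s) - int k" using st by simp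
    hence "(int t - (int s + int k)) mod int k = (int (t - s) - int k) mod int k" by (rule arg_cong)
    also have "\<dots> = int (t - s) mod int k" by (rule minus_mod_self2)
    also have "\<dots> = int d mod int k" using d by (simp add: d_def zmod_int)
    finally show ?thesis by (simp add: cong_def)
  qed
  show ?thesis
  proof (intro exI conjI)
    show "k - 1 - d < k - d + c" "k - d + c \<le> k" "k - d + c \<noteq> k - 1 - d + 1"
      using c cd' d by auto
    show "Floc k w t = {0..k - 1 - d} \<union> {k - d + c..k - 1}"
      unfolding Ft using residue_set_two_intervals[OF c(1) cd'(2) d] .
    show "Floc k w s = {0} \<union> {k - d + c - (k - 1 - d) - 1..k - 1}"
      using Fs cd' d by simp
    show "[int t - (int s + int k) = int (k - 1 - (k - 1 - d))] (mod int k)"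
      using cong d by simp
  qed
qed

theorem theorem3:
  fixes k :: nat and w :: word and s t :: nat
  assumes "k \<ge> 4"
    and "min_uncompletable k w"
    and "consecutive k w s t"
    and "card (Floc k w s) > card (Floc k w t)"
  shows "(occ k w (uw k) s \<and> occ k w (uw k) t \<and>
          (\<exists>j. 1 \<le> j \<and> j \<le> k - 2 \<and>
               Floc k w s = {0} \<union> {k - j..k - 1} \<and> Floc k w t = {1..j}))
       \<or> (occ k w (vw k) s \<and> occ k w (uw k) t \<and> overlap k s t \<and>
          Floc k w s = {0, k - 1} \<and> Floc k w t = {1})
       \<or> (occ k w (uw k) s \<and> occ k w (vw k) t \<and>
          (\<exists>i j. i < j \<and> j \<le> k \<and> j \<noteq> i + 1 \<and>
               Floc k w t = {0..i} \<union> {j..k - 1} \<and>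
               Floc k w s = {0} \<union> {j - i - 1..k - 1} \<and>
               [int t - (int s + int k) = int (k - 1 - i)] (mod int k)))"
proof -
  note k = assms(1) and mu = assms(2) and cd = assms(4)
  have st: "s < t" and os: "occ_uv k w s" and ot: "occ_uv k w t"
    using assms(3) by (auto simp: consecutive_def)
  have gap: "\<forall>r. s < r \<and> r < t \<longrightarrow> \<not> occ_uv k w r"
    using consecutive_no_occ_between[OF k assms(3)] by blast
  show ?thesis
  proof (cases "overlap k s t")
    case True
    hence "occ k w (vw k) s" "occ k w (uw k) t" "t = s + k - 2"
      using overlap_v_u[OF k os ot st] by (auto simp: overlap_def)
    thus ?thesis using overlap_case[OF k mu _ _ _ gap cd] True by blast
  next
    case False
    hence apart: "s + k \<le> t" by (simp add: overlap_def)
    have us: "occ k w (uw k) s"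
      using os v_then_apart[OF k mu _ ot apart gap] cd by (auto simp: occ_uv_def)
    show ?thesis
    proof (cases "occ k w (uw k) t")
      case True thus ?thesis using u_then_u[OF k us True apart gap cd] us by blast
    next
      case False
      hence "occ k w (vw k) t" using ot by (simp add: occ_uv_def)
      thus ?thesis using u_then_v[OF k us _ apart gap cd] us by blast
    qed
  qed
qed

end
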